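(* Let $K$ be an algebraically closed field, let $f\colon\mathbb Z^k\to K$ be a hypergeometric term on $\mathbb Z^k$, and suppose $f$ is factorial on a region $\mathcal R\subset\mathbb Z^k$. Then there exist a vector $\boldsymbol\gamma=(\gamma_1,\dots,\gamma_k)\in K^k$, constants $m_1,\dots,m_p,n_1,\dots,n_q\in K$, vectors $\vec v_1,\dots,\vec v_p,\vec w_1,\dots,\vec w_q\in\mathbb Z^k$ and integers $r_1,\dots,r_p,s_1,\dots,s_q$ such that for all $\vec z\in\mathcal R$: (1) $f(\vec z)=\gamma_1^{z_1}\cdots\gamma_k^{z_k}\,\dfrac{\prod_{i=1}^p(m_i)_{\vec v_i\cdot\vec z+r_i}}{\prod_{j=1}^q(n_j)_{\vec w_j\cdot\vec z+s_j}}$; (2) $\vec v_i\cdot\vec z+r_i$ and $\vec w_j\cdot\vec z+s_j$ are positive integers for all $i\in\{1,\dots,p\}$, $j\in\{1,\dots,q\}$; (3) all the terms appearing in the numerator and denominator are nonzero.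
   Context: A hypergeometric term on $\mathbb Z^k$ over $K$ is a function $f\colon\mathbb Z^k\to K$ such that for each $i$ there are nonzero polynomials $A_i,B_i\in K[\vec z]$ with $A_i(\vec z)f(\vec z)=B_i(\vec z)f(\vec z+\vec e_i)$ for all $\vec z\in\mathbb Z^k$. $f$ is factorial on a region $\mathcal R\subset\mathbb Z^k$ if there exist a finite set $V\subset\mathbb Z^k$, and for each $\vec v\in V$ univariate polynomials $a_{\vec v},b_{\vec v}\in K[z]$ and an integer $n_{\vec v}$, such that for all $\vec z\in\mathcal R$: $f(\vec z)=\prod_{\vec v\in V}\prod_{j=1}^{\vec v\cdot\vec z+n_{\vec v}}a_{\vec v}(j)/b_{\vec v}(j)$; each $\vec v\cdot\vec z+n_{\vec v}$ is a positive integer; and $a_{\vec v}(j)\ne0$, $b_{\vec v}(j)\ne0$ for $1\le j\le\vec v\cdot\vec z+n_{\vec v}$. The Pochhammer symbol is $(m)_r=m(m+1)\cdots(m+r-1)$. *)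

theory Defs
  imports "HOL-Analysis.Analysis" "HOL-Computational_Algebra.Polynomial"
begin

definition alg_closed_field :: "'a::field itself \<Rightarrow> bool" where
  "alg_closed_field _ \<longleftrightarrow> (\<forall>p::'a poly. degree p > 0 \<longrightarrow> (\<exists>x. poly p x = 0))"

definition dotI :: "int^'k \<Rightarrow> int^'k \<Rightarrow> int" where
  "dotI v z = (\<Sum>i\<in>UNIV. v$i * z$i)"

text \<open>Multivariate polynomials in \<open>K[z_1,...,z_k]\<close> represented by their coefficient
  function on exponent vectors (finite support); evaluation at an integer point.\<close>
definition mpoly_coeffs :: "(nat^'k \<Rightarrow> 'a::field) \<Rightarrow> bool" where
  "mpoly_coeffs c \<longleftrightarrow> finite {\<alpha>. c \<alpha> \<noteq> 0}"

definition mpoly_nonzero :: "(nat^'k \<Rightarrow> 'a::field) \<Rightarrow> bool" where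
  "mpoly_nonzero c \<longleftrightarrow> (\<exists>\<alpha>. c \<alpha> \<noteq> 0)"

definition mpoly_eval :: "(nat^'k \<Rightarrow> 'a::field) \<Rightarrow> int^'k \<Rightarrow> 'a" where
  "mpoly_eval c z = (\<Sum>\<alpha>\<in>{\<alpha>. c \<alpha> \<noteq> 0}. c \<alpha> * (\<Prod>i\<in>UNIV. (of_int (z$i)) ^ (\<alpha>$i)))"

definition hypergeometric_term :: "(int^'k \<Rightarrow> 'a::field) \<Rightarrow> bool" where
  "hypergeometric_term f \<longleftrightarrow>
     (\<forall>i. \<exists>A B. mpoly_coeffs A \<and> mpoly_coeffs B \<and> mpoly_nonzero A \<and> mpoly_nonzero B \<and>
        (\<forall>z. mpoly_eval A z * f z = mpoly_eval B z * f (z + axis i 1)))"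

definition factorial_on :: "(int^'k \<Rightarrow> 'a::field) \<Rightarrow> (int^'k) set \<Rightarrow> bool" where
  "factorial_on f R \<longleftrightarrow>
     (\<exists>(V :: (int^'k) set) (a :: int^'k \<Rightarrow> 'a poly) (b :: int^'k \<Rightarrow> 'a poly) (n :: int^'k \<Rightarrow> int).
        finite V \<and>
        (\<forall>z\<in>R.
           f z = (\<Prod>v\<in>V. \<Prod>j=1..nat (dotI v z + n v).
                    poly (a v) (of_nat j) / poly (b v) (of_nat j)) \<and>
           (\<forall>v\<in>V. dotI v z + n v > 0 \<and>
              (\<forall>j\<in>{1..nat (dotI v z + n v)}.
                 poly (a v) (of_nat j) \<noteq> 0 \<and> poly (b v) (of_nat j) \<noteq> 0))))"

end

theory Submission
  imports Defs
begin

text \<open>Every factor \<open>\<Prod>\<^sub>j\<^sub>=\<^sub>1\<^sup>N a(j)\<close> of a factorial representation splits, over an algebraically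
  closed field, into a constant power \<open>c\<^sup>N\<close> and products \<open>\<Prod>\<^sub>j\<^sub>=\<^sub>1\<^sup>N (j - x) = (1 - x)\<^sub>N\<close>
  over the roots \<open>x\<close> of \<open>a\<close>.  With \<open>N = v\<cdot>z + n\<close>, the power \<open>c\<^sup>N\<close> is geometric in \<open>z\<close>, and
  the nonvanishing of \<open>a(j)\<close> for \<open>1 \<le> j \<le> N\<close> is exactly the nonvanishing of the factors of the
  Pochhammer symbol.  The required shape is closed under products and inverses, so it passes
  to the quotient of the factorial representation.\<close>

definition geom_term :: "'a::field^'k \<Rightarrow> int^'k \<Rightarrow> 'a" where
  "geom_term \<gamma> z = (\<Prod>i\<in>UNIV. (\<gamma>$i) powi (z$i))"

definition poch_prod :: "('a::field \<times> (int^'k) \<times> int) list \<Rightarrow> int^'k \<Rightarrow> 'a" where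
  "poch_prod xs z = (\<Prod>(m, v, r)\<leftarrow>xs. pochhammer m (nat (dotI v z + r)))"

definition poch_admissible :: "('a::field \<times> (int^'k) \<times> int) list \<Rightarrow> int^'k \<Rightarrow> bool" where
  "poch_admissible xs z \<longleftrightarrow>
     (\<forall>(m, v, r)\<in>set xs. dotI v z + r > 0 \<and> (\<forall>l<nat (dotI v z + r). m + of_nat l \<noteq> 0))"

definition poch_quotient_on :: "(int^'k) set \<Rightarrow> (int^'k \<Rightarrow> 'a::field) \<Rightarrow> bool" where
  "poch_quotient_on R f \<longleftrightarrow> (\<exists>\<gamma> P Q. \<forall>z\<in>R.
     f z = geom_term \<gamma> z * poch_prod P z / poch_prod Q z \<and>
     poch_admissible P z \<and> poch_admissible Q z)"

lemma geom_term_mult: "geom_term (\<chi> i. \<gamma>$i * \<delta>$i) z = geom_term \<gamma> z * geom_term \<delta> z"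
  by (simp add: geom_term_def power_int_mult_distrib prod.distrib)

lemma geom_term_inverse: "geom_term (\<chi> i. inverse (\<gamma>$i)) z = inverse (geom_term \<gamma> z)"
  using prod_inversef[of "\<lambda>i. \<gamma>$i powi z$i" UNIV]
  by (simp add: geom_term_def power_int_inverse o_def)

lemma poch_prod_append: "poch_prod (P @ Q) z = poch_prod P z * poch_prod Q z"
  by (simp add: poch_prod_def)

lemma poch_admissible_append:
  "poch_admissible (P @ Q) z \<longleftrightarrow> poch_admissible P z \<and> poch_admissible Q z"
  by (simp add: poch_admissible_def ball_Un)

lemma poch_quotient_on_cong:
  "poch_quotient_on R f \<Longrightarrow> (\<And>z. z \<in> R \<Longrightarrow> g z = f z) \<Longrightarrow> poch_quotient_on R g"
  unfolding poch_quotient_on_def by metis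

lemma poch_quotient_on_empty: "poch_quotient_on {} f"
  by (simp add: poch_quotient_on_def)

lemma poch_quotient_on_one: "poch_quotient_on R (\<lambda>z. 1)"
  unfolding poch_quotient_on_def
  by (intro exI[of _ "\<chi> i. 1"] exI[of _ "[]"]) (simp add: geom_term_def poch_prod_def poch_admissible_def)

lemma poch_quotient_on_geom_term: "poch_quotient_on R (geom_term \<gamma>)"
  unfolding poch_quotient_on_def
  by (intro exI[of _ \<gamma>] exI[of _ "[]"]) (simp add: poch_prod_def poch_admissible_def)

lemma poch_quotient_on_pochhammer:
  assumes "\<And>z. z \<in> R \<Longrightarrow> dotI v z + r > 0 \<and> (\<forall>l<nat (dotI v z + r). m + of_nat l \<noteq> 0)"
  shows "poch_quotient_on R (\<lambda>z. pochhammer m (nat (dotI v z + r)))"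
  unfolding poch_quotient_on_def
  by (intro exI[of _ "\<chi> i. 1"] exI[of _ "[(m, v, r)]"] exI[of _ "[]"])
     (simp add: geom_term_def poch_prod_def poch_admissible_def assms)

text \<open>A nonzero constant is \<open>(C)\<^sub>1\<close>.\<close>

lemma poch_quotient_on_const:
  assumes "C \<noteq> 0"
  shows "poch_quotient_on R (\<lambda>z. C)"
  using poch_quotient_on_pochhammer[of R 0 1 C] assms by (simp add: dotI_def)

lemma poch_quotient_on_mult:
  assumes "poch_quotient_on R f" "poch_quotient_on R g"
  shows "poch_quotient_on R (\<lambda>z. f z * g z)"
proof -
  obtain \<gamma> P Q where f: "\<forall>z\<in>R. f z = geom_term \<gamma> z * poch_prod P z / poch_prod Q z \<and>
      poch_admissible P z \<and> poch_admissible Q z"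
    using assms(1) unfolding poch_quotient_on_def by blast
  obtain \<delta> P' Q' where g: "\<forall>z\<in>R. g z = geom_term \<delta> z * poch_prod P' z / poch_prod Q' z \<and>
      poch_admissible P' z \<and> poch_admissible Q' z"
    using assms(2) unfolding poch_quotient_on_def by blast
  show ?thesis
    unfolding poch_quotient_on_def
    by (intro exI[of _ "\<chi> i. \<gamma>$i * \<delta>$i"] exI[of _ "P @ P'"] exI[of _ "Q @ Q'"])
       (use f g in \<open>auto simp: geom_term_mult poch_prod_append poch_admissible_append\<close>)
qed

lemma poch_quotient_on_inverse:
  assumes "poch_quotient_on R f"
  shows "poch_quotient_on R (\<lambda>z. inverse (f z))"
proof -
  obtain \<gamma> P Q where f: "\<forall>z\<in>R. f z = geom_term \<gamma> z * poch_prod P z / poch_prod Q z \<and>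
      poch_admissible P z \<and> poch_admissible Q z"
    using assms unfolding poch_quotient_on_def by blast
  show ?thesis
    unfolding poch_quotient_on_def
    by (intro exI[of _ "\<chi> i. inverse (\<gamma>$i)"] exI[of _ Q] exI[of _ P])
       (use f in \<open>auto simp: geom_term_inverse divide_inverse inverse_mult_distrib mult_ac\<close>)
qed

lemma poch_quotient_on_divide:
  "poch_quotient_on R f \<Longrightarrow> poch_quotient_on R g \<Longrightarrow> poch_quotient_on R (\<lambda>z. f z / g z)"
  unfolding divide_inverse by (intro poch_quotient_on_mult poch_quotient_on_inverse)

lemma poch_quotient_on_prod:
  "finite V \<Longrightarrow> (\<And>v. v \<in> V \<Longrightarrow> poch_quotient_on R (F v)) \<Longrightarrow>
     poch_quotient_on R (\<lambda>z. \<Prod>v\<in>V. F v z)"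
  by (induction V rule: finite_induct) (simp_all add: poch_quotient_on_one poch_quotient_on_mult)

lemma power_int_sum:
  assumes "(c::'a::field) \<noteq> 0" "finite A"
  shows "c powi (\<Sum>i\<in>A. g i) = (\<Prod>i\<in>A. c powi g i)"
  using assms(2) by (induction A rule: finite_induct) (auto simp: power_int_add assms)

text \<open>\<open>c\<^sup>v\<^sup>\<cdot>\<^sup>z\<^sup>+\<^sup>n = c\<^sup>n \<Prod>\<^sub>i (c\<^sup>v\<^sup>\<^sub>i)\<^sup>z\<^sup>\<^sub>i\<close> is a constant times a geometric term.\<close>

lemma poch_quotient_on_power_int_affine:
  assumes "(c::'a::field) \<noteq> 0"
  shows "poch_quotient_on R (\<lambda>z. c powi (dotI v z + n))"
proof (rule poch_quotient_on_cong)
  show "poch_quotient_on R (\<lambda>z. c powi n * geom_term (\<chi> i. c powi (v$i)) z)"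
    using assms by (intro poch_quotient_on_mult poch_quotient_on_const poch_quotient_on_geom_term) simp
  show "c powi (dotI v z + n) = c powi n * geom_term (\<chi> i. c powi (v$i)) z" for z
    using assms by (simp add: dotI_def geom_term_def power_int_add power_int_sum
        power_int_mult[symmetric] mult.commute)
qed

lemma pochhammer_one_minus: "pochhammer (1 - x) N = (\<Prod>j=1..N. of_nat j - (x::'a::field))"
  by (induction N) (simp_all add: pochhammer_Suc algebra_simps prod.nat_ivl_Suc')

lemma poch_quotient_on_prod_linear:
  assumes "\<And>z. z \<in> R \<Longrightarrow> dotI v z + n > 0 \<and> (\<forall>j\<in>{1..nat (dotI v z + n)}. of_nat j \<noteq> x)"
  shows "poch_quotient_on R (\<lambda>z. \<Prod>j=1..nat (dotI v z + n). of_nat j - (x::'a::field))"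
proof -
  have "poch_quotient_on R (\<lambda>z. pochhammer (1 - x) (nat (dotI v z + n)))"
  proof (rule poch_quotient_on_pochhammer)
    fix z assume "z \<in> R"
    then have "dotI v z + n > 0" and "\<forall>j\<in>{1..nat (dotI v z + n)}. of_nat j \<noteq> x"
      using assms by auto
    moreover have "1 - x + of_nat l = of_nat (Suc l) - x" for l
      by simp
    ultimately show "dotI v z + n > 0 \<and> (\<forall>l<nat (dotI v z + n). 1 - x + of_nat l \<noteq> 0)"
      by (metis Suc_leI atLeastAtMost_iff eq_iff_diff_eq_0 le_add1 plus_1_eq_Suc)
  qed
  then show ?thesis
    by (simp add: pochhammer_one_minus)
qed

lemma poch_quotient_on_prod_poly:
  assumes "alg_closed_field TYPE('a::field)"
    and "\<And>z. z \<in> R \<Longrightarrow> dotI v z + n > 0 \<and> (\<forall>j\<in>{1..nat (dotI v z + n)}. poly a (of_nat j) \<noteq> (0::'a))"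
  shows "poch_quotient_on R (\<lambda>z. \<Prod>j=1..nat (dotI v z + n). poly a (of_nat j))"
  using assms(2)
proof (induction "degree a" arbitrary: a rule: less_induct)
  case less
  show ?case
  proof (cases "degree a = 0")
    case True
    then obtain c where a: "a = [:c:]"
      using degree_eq_zeroE by blast
    show ?thesis
    proof (cases "R = {}")
      case False
      then have "c \<noteq> 0"
        using less.prems by (force simp: a)
      from poch_quotient_on_power_int_affine[OF this, of R v n] show ?thesis
      proof (rule poch_quotient_on_cong)
        fix z assume "z \<in> R"
        then have "dotI v z + n > 0"
          using less.prems by blast
        then show "(\<Prod>j=1..nat (dotI v z + n). poly a (of_nat j)) = c powi (dotI v z + n)"
          by (simp add: a power_int_def)
      qed
    qed (simp add: poch_quotient_on_empty)
  next
    case False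
    then obtain x where "poly a x = 0"
      using assms(1) unfolding alg_closed_field_def by blast
    then obtain q where a: "a = [:-x, 1:] * q"
      by (metis dvdE poly_eq_0_iff_dvd)
    from False have "q \<noteq> 0"
      by (auto simp: a)
    then have "degree a = degree [:-x, 1:] + degree q"
      unfolding a by (intro degree_mult_eq) auto
    then have "degree q < degree a"
      by simp
    have poly_a: "poly a t = (t - x) * poly q t" for t
      by (simp add: a algebra_simps)
    have "poch_quotient_on R (\<lambda>z. (\<Prod>j=1..nat (dotI v z + n). of_nat j - x) *
        (\<Prod>j=1..nat (dotI v z + n). poly q (of_nat j)))"
      using less.prems by (intro poch_quotient_on_mult poch_quotient_on_prod_linear
          less.hyps[OF \<open>degree q < degree a\<close>]) (auto simp: poly_a)
    then show ?thesis
      by (rule poch_quotient_on_cong) (simp add: poly_a prod.distrib)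
  qed
qed

lemma poch_quotient_on_factorial:
  assumes "alg_closed_field TYPE('a::field)" and "factorial_on (f :: int^'k \<Rightarrow> 'a) R"
  shows "poch_quotient_on R f"
proof -
  obtain V a b n where "finite V" and fact: "\<forall>z\<in>R.
      f z = (\<Prod>v\<in>V. \<Prod>j=1..nat (dotI v z + n v). poly (a v) (of_nat j) / poly (b v) (of_nat j)) \<and>
      (\<forall>v\<in>V. dotI v z + n v > 0 \<and> (\<forall>j\<in>{1..nat (dotI v z + n v)}.
         poly (a v) (of_nat j) \<noteq> 0 \<and> poly (b v) (of_nat j) \<noteq> 0))"
    using assms(2) unfolding factorial_on_def by blast
  have "poch_quotient_on R (\<lambda>z. \<Prod>v\<in>V. (\<Prod>j=1..nat (dotI v z + n v). poly (a v) (of_nat j)) /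
      (\<Prod>j=1..nat (dotI v z + n v). poly (b v) (of_nat j)))"
    using fact by (intro poch_quotient_on_prod \<open>finite V\<close> poch_quotient_on_divide
        poch_quotient_on_prod_poly[OF assms(1)]) auto
  then show ?thesis
    by (rule poch_quotient_on_cong) (simp add: fact prod_dividef)
qed

lemma prod_list_eq_prod_nth1: "(\<Prod>x\<leftarrow>xs. g x) = (\<Prod>i\<in>{1..length xs}. g (xs!(i - 1)))"
proof -
  have "{1..length xs} = Suc ` {..<length xs}"
    by (simp add: image_Suc_lessThan)
  then have "(\<Prod>i\<in>{1..length xs}. g (xs!(i - 1))) = (\<Prod>i<length xs. g (xs!i))"
    by (simp add: prod.reindex)
  also have "\<dots> = (\<Prod>x\<leftarrow>xs. g x)"
    by (induction xs rule: rev_induct) (simp_all add: nth_append)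
  finally show ?thesis
    by simp
qed

lemma poch_prod_nth1:
  "poch_prod xs z = (\<Prod>i\<in>{1..length xs}. pochhammer (fst (xs!(i - 1)))
     (nat (dotI (fst (snd (xs!(i - 1)))) z + snd (snd (xs!(i - 1))))))"
  unfolding poch_prod_def prod_list_eq_prod_nth1 by (simp add: case_prod_beta)

lemma poch_admissible_iff_nth1:
  "poch_admissible xs z \<longleftrightarrow>
    (\<forall>i\<in>{1..length xs}. dotI (fst (snd (xs!(i - 1)))) z + snd (snd (xs!(i - 1))) > 0) \<and>
    (\<forall>i\<in>{1..length xs}. \<forall>l<nat (dotI (fst (snd (xs!(i - 1)))) z + snd (snd (xs!(i - 1)))).
       fst (xs!(i - 1)) + of_nat l \<noteq> 0)"
proof -
  have "{1..length xs} = Suc ` {..<length xs}"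
    by (simp add: image_Suc_lessThan)
  then have "set xs = (\<lambda>i. xs!(i - 1)) ` {1..length xs}"
    using nth_image[of "length xs" xs] by (simp add: image_image atLeast0LessThan)
  then show ?thesis
    unfolding poch_admissible_def by (auto simp: case_prod_beta)
qed

theorem lemmaB23:
  fixes f :: "int^'k \<Rightarrow> 'a::field" and R :: "(int^'k) set"
  assumes "alg_closed_field TYPE('a)"
    and "hypergeometric_term f"
    and "factorial_on f R"
  shows "\<exists>(\<gamma> :: 'a^'k) (p::nat) (q::nat) (m :: nat \<Rightarrow> 'a) (n :: nat \<Rightarrow> 'a)
           (v :: nat \<Rightarrow> int^'k) (w :: nat \<Rightarrow> int^'k) (r :: nat \<Rightarrow> int) (s :: nat \<Rightarrow> int).
     \<forall>z\<in>R.
       f z = (\<Prod>i\<in>UNIV. (\<gamma>$i) powi (z$i)) *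
             (\<Prod>i\<in>{1..p}. pochhammer (m i) (nat (dotI (v i) z + r i))) /
             (\<Prod>j\<in>{1..q}. pochhammer (n j) (nat (dotI (w j) z + s j))) \<and>
       (\<forall>i\<in>{1..p}. dotI (v i) z + r i > 0) \<and>
       (\<forall>j\<in>{1..q}. dotI (w j) z + s j > 0) \<and>
       (\<forall>i\<in>{1..p}. \<forall>l < nat (dotI (v i) z + r i). m i + of_nat l \<noteq> 0) \<and>
       (\<forall>j\<in>{1..q}. \<forall>l < nat (dotI (w j) z + s j). n j + of_nat l \<noteq> 0)"
proof -
  obtain \<gamma> P Q where PQ: "\<forall>z\<in>R. f z = geom_term \<gamma> z * poch_prod P z / poch_prod Q z \<and>
      poch_admissible P z \<and> poch_admissible Q z"
    using poch_quotient_on_factorial[OF assms(1,3)] unfolding poch_quotient_on_def by blast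
  then have indexed: "\<forall>z\<in>R. f z = (\<Prod>i\<in>UNIV. (\<gamma>$i) powi (z$i)) *
        (\<Prod>i\<in>{1..length P}. pochhammer (fst (P!(i - 1)))
          (nat (dotI (fst (snd (P!(i - 1)))) z + snd (snd (P!(i - 1)))))) /
        (\<Prod>j\<in>{1..length Q}. pochhammer (fst (Q!(j - 1)))
          (nat (dotI (fst (snd (Q!(j - 1)))) z + snd (snd (Q!(j - 1)))))) \<and>
      poch_admissible P z \<and> poch_admissible Q z"
    unfolding geom_term_def poch_prod_nth1 .
  show ?thesis
    by (intro exI[of _ \<gamma>] exI[of _ "length P"] exI[of _ "length Q"]
        exI[of _ "\<lambda>i. fst (P!(i - 1))"] exI[of _ "\<lambda>i. fst (Q!(i - 1))"]
        exI[of _ "\<lambda>i. fst (snd (P!(i - 1)))"] exI[of _ "\<lambda>i. fst (snd (Q!(i - 1)))"]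
        exI[of _ "\<lambda>i. snd (snd (P!(i - 1)))"] exI[of _ "\<lambda>i. snd (snd (Q!(i - 1)))"])
       (use indexed in \<open>simp only: poch_admissible_iff_nth1 conj_ac\<close>)
qed

end
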